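(* Let $\Omega\subseteq\mathbb{R}^2$ be a bounded, simply connected domain of class $C^1$, let $a_1,\ldots,a_p$ be distinct points in $\Omega$, and let $\{L_1,\ldots,L_q\}$ be a minimal connection for $\{a_1,\ldots,a_p\}$ relative to $\Omega$. If some $L_j$ has an endpoint $b_j\in\partial\Omega$, then $L_j$ is orthogonal to $\partial\Omega$ at $b_j$.
   Context: A connection for $\{a_1,\ldots,a_p\}$ relative to $\Omega$ is a finite collection $\{L_1,\ldots,L_q\}$ of closed non-degenerate straight line segments such that (i) each $L_j\subseteq\overline\Omega$; (ii) each $L_j$ either connects two of $a_1,\ldots,a_p$ or connects some $a_i$ with a point of $\partial\Omega$; (iii) each $a_i$ is an endpoint of an odd number of the $L_j$. A minimal connection relative to $\Omega$ is one minimising $\sum_j\mathcal{H}^1(L_j)$ among all connections relative to $\Omega$. *)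

theory Defs
  imports "HOL-Analysis.Analysis"
begin

definition C1_boundary :: "(real^2) set \<Rightarrow> bool" where
  "C1_boundary \<Omega> \<longleftrightarrow>
     (\<forall>b \<in> frontier \<Omega>. \<exists>r > 0. \<exists>e1 e2 :: real^2. \<exists>g :: real \<Rightarrow> real.
        norm e1 = 1 \<and> norm e2 = 1 \<and> e1 \<bullet> e2 = 0 \<and>
        g C1_differentiable_on UNIV \<and>
        \<Omega> \<inter> ball b r = {x \<in> ball b r. (x - b) \<bullet> e2 > g ((x - b) \<bullet> e1)})"

definition is_endpoint :: "real^2 \<Rightarrow> (real^2) set \<Rightarrow> bool" where
  "is_endpoint x L \<longleftrightarrow> (\<exists>y. y \<noteq> x \<and> L = closed_segment x y)"

definition connection :: "(real^2) set \<Rightarrow> (real^2) set \<Rightarrow> (real^2) set set \<Rightarrow> bool" where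
  "connection \<Omega> A C \<longleftrightarrow>
     finite C \<and>
     (\<forall>L \<in> C. L \<subseteq> closure \<Omega> \<and>
        (\<exists>x y. x \<noteq> y \<and> L = closed_segment x y \<and> x \<in> A \<and> (y \<in> A \<or> y \<in> frontier \<Omega>))) \<and>
     (\<forall>a \<in> A. odd (card {L \<in> C. is_endpoint a L}))"

text \<open>Total length: for a segment, the 1-dimensional Hausdorff measure equals its diameter.\<close>
definition conn_length :: "(real^2) set set \<Rightarrow> real" where
  "conn_length C = (\<Sum>L\<in>C. diameter L)"

definition minimal_connection :: "(real^2) set \<Rightarrow> (real^2) set \<Rightarrow> (real^2) set set \<Rightarrow> bool" where
  "minimal_connection \<Omega> A C \<longleftrightarrow>
     connection \<Omega> A C \<and> (\<forall>C'. connection \<Omega> A C' \<longrightarrow> conn_length C \<le> conn_length C')"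

definition orthogonal_to_boundary_at ::
  "(real^2) set \<Rightarrow> real^2 \<Rightarrow> real^2 \<Rightarrow> bool" where
  "orthogonal_to_boundary_at \<Omega> b x \<longleftrightarrow>
     (\<forall>\<gamma> :: real \<Rightarrow> real^2. \<forall>v.
        \<gamma> 0 = b \<longrightarrow> (\<forall>\<^sub>F t in nhds 0. \<gamma> t \<in> frontier \<Omega>) \<longrightarrow>
        (\<gamma> has_vector_derivative v) (at 0) \<longrightarrow> (x - b) \<bullet> v = 0)"

end

theory Submission
  imports Defs
begin

text \<open>Let \<open>L\<close> join \<open>a \<in> A\<close> to the boundary point \<open>b\<close>. If some boundary point \<open>c\<close> were
  strictly closer to \<open>a\<close> than \<open>b\<close>, take \<open>c\<close> nearest to \<open>a\<close>; the segment from \<open>a\<close> to \<open>c\<close>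
  lies in the closure of \<open>\<Omega>\<close>, so replacing \<open>L\<close> by it (or, if it already belongs to the
  connection, deleting both) gives a shorter connection. Hence \<open>b\<close> is a nearest boundary
  point to \<open>a\<close>, and for any curve \<open>\<gamma>\<close> in the boundary through \<open>b\<close> the function
  \<open>|a - \<gamma> t|\<^sup>2\<close> has a local minimum at \<open>0\<close>; its derivative \<open>-2 (a - b) \<bullet> \<gamma>'(0)\<close> vanishes.\<close>

lemma diameter_closed_segment:
  fixes a b :: "'a::real_normed_vector"
  shows "diameter (closed_segment a b) = dist a b"
proof (rule antisym)
  show "diameter (closed_segment a b) \<le> dist a b"
  proof (rule diameter_le)
    show "closed_segment a b \<noteq> {} \<or> 0 \<le> dist a b" by simp
    fix x y assume "x \<in> closed_segment a b" "y \<in> closed_segment a b"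
    then obtain s t where s: "x = (1 - s) *\<^sub>R a + s *\<^sub>R b" "0 \<le> s" "s \<le> 1"
      and t: "y = (1 - t) *\<^sub>R a + t *\<^sub>R b" "0 \<le> t" "t \<le> 1"
      by (auto simp: closed_segment_def)
    have "x - y = (s - t) *\<^sub>R (b - a)" unfolding s(1) t(1) by (simp add: algebra_simps)
    then have "norm (x - y) = \<bar>s - t\<bar> * norm (b - a)" by simp
    also have "\<dots> \<le> norm (b - a)"
      using s t mult_right_mono[of "\<bar>s - t\<bar>" 1 "norm (b - a)"] by auto
    finally show "norm (x - y) \<le> dist a b" by (simp add: dist_norm norm_minus_commute)
  qed
  show "dist a b \<le> diameter (closed_segment a b)"
    by (rule diameter_bounded_bound) (auto intro: compact_imp_bounded)
qed

lemma is_endpoint_closed_segment_iff: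
  assumes "u \<noteq> w"
  shows "is_endpoint p (closed_segment u w) \<longleftrightarrow> p = u \<or> p = w"
  using assms unfolding is_endpoint_def by (auto simp: doubleton_eq_iff)

lemma closed_segment_to_nearest_frontier_point_subset_closure:
  fixes S :: "'a::euclidean_space set"
  assumes "a \<in> S" and "c \<in> frontier S" and nearest: "\<And>z. z \<in> frontier S \<Longrightarrow> dist a c \<le> dist a z"
  shows "closed_segment a c \<subseteq> closure S"
proof (cases "a = c")
  case True
  then show ?thesis using \<open>a \<in> S\<close> closure_subset by auto
next
  case False
  have "open_segment a c \<subseteq> S"
  proof
    fix p assume p: "p \<in> open_segment a c"
    have "closed_segment a p \<inter> frontier S = {}"
    proof (rule ccontr)
      assume "closed_segment a p \<inter> frontier S \<noteq> {}"
      then obtain q where "q \<in> closed_segment a p" "q \<in> frontier S" by blast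
      then have "dist a c \<le> dist a q" "dist q a \<le> dist a p"
        using nearest dist_in_closed_segment by blast+
      with dist_in_open_segment[OF p] show False by (simp add: dist_commute)
    qed
    then have "closed_segment a p \<subseteq> S"
      using connected_Int_frontier[OF connected_segment] \<open>a \<in> S\<close> by blast
    then show "p \<in> S" by auto
  qed
  then have "closure (open_segment a c) \<subseteq> closure S" by (rule closure_mono)
  with False show ?thesis by simp
qed

definition connection_segment :: "(real^2) set \<Rightarrow> (real^2) set \<Rightarrow> (real^2) set \<Rightarrow> bool" where
  "connection_segment \<Omega> A L \<longleftrightarrow> L \<subseteq> closure \<Omega> \<and>
     (\<exists>x y. x \<noteq> y \<and> L = closed_segment x y \<and> x \<in> A \<and> (y \<in> A \<or> y \<in> frontier \<Omega>))"

lemma connection_iff: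
  "connection \<Omega> A C \<longleftrightarrow> finite C \<and> (\<forall>L \<in> C. connection_segment \<Omega> A L) \<and>
     (\<forall>a \<in> A. odd (card {L \<in> C. is_endpoint a L}))"
  by (simp add: connection_def connection_segment_def)

lemma connection_replace_segment:
  assumes "connection \<Omega> A C" and "L \<in> C" and "L' \<notin> C" and "connection_segment \<Omega> A L'"
    and same_ends: "\<And>p. p \<in> A \<Longrightarrow> is_endpoint p L' \<longleftrightarrow> is_endpoint p L"
  shows "connection \<Omega> A (insert L' (C - {L}))"
  unfolding connection_iff
proof (intro conjI ballI)
  fix p assume "p \<in> A"
  define S where "S = {M \<in> C. is_endpoint p M}"
  have "finite S" "odd (card S)"
    using assms(1) \<open>p \<in> A\<close> by (auto simp: connection_iff S_def)
  show "odd (card {M \<in> insert L' (C - {L}). is_endpoint p M})"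
  proof (cases "is_endpoint p L")
    case True
    then have "L \<in> S" using \<open>L \<in> C\<close> by (simp add: S_def)
    have "{M \<in> insert L' (C - {L}). is_endpoint p M} = insert L' (S - {L})"
      using True same_ends[OF \<open>p \<in> A\<close>] by (auto simp: S_def)
    moreover have "card (insert L' (S - {L})) = card S"
      using \<open>L \<in> S\<close> \<open>finite S\<close> \<open>L' \<notin> C\<close> card_gt_0_iff[of S]
      by (auto simp: S_def card_Diff_singleton)
    ultimately show ?thesis using \<open>odd (card S)\<close> by simp
  next
    case False
    then have "{M \<in> insert L' (C - {L}). is_endpoint p M} = S"
      using same_ends[OF \<open>p \<in> A\<close>] by (auto simp: S_def)
    then show ?thesis using \<open>odd (card S)\<close> by simp
  qed
qed (use assms in \<open>auto simp: connection_iff\<close>)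

lemma connection_remove_segment_pair:
  assumes "connection \<Omega> A C" and "L \<in> C" and "L' \<in> C" and "L \<noteq> L'"
    and same_ends: "\<And>p. p \<in> A \<Longrightarrow> is_endpoint p L' \<longleftrightarrow> is_endpoint p L"
  shows "connection \<Omega> A (C - {L, L'})"
  unfolding connection_iff
proof (intro conjI ballI)
  fix p assume "p \<in> A"
  define S where "S = {M \<in> C. is_endpoint p M}"
  have "finite S" "odd (card S)"
    using assms(1) \<open>p \<in> A\<close> by (auto simp: connection_iff S_def)
  have removed: "{M \<in> C - {L, L'}. is_endpoint p M} = S - {L, L'}"
    by (auto simp: S_def)
  show "odd (card {M \<in> C - {L, L'}. is_endpoint p M})"
  proof (cases "is_endpoint p L")
    case True
    then have "{L, L'} \<subseteq> S"
      using assms(2,3) same_ends[OF \<open>p \<in> A\<close>] by (simp add: S_def)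
    then have "card (S - {L, L'}) + 2 = card S"
      using \<open>finite S\<close> \<open>L \<noteq> L'\<close> card_Diff_subset[of "{L, L'}" S] card_mono[of S "{L, L'}"]
      by (auto simp: finite_subset)
    then show ?thesis using removed \<open>odd (card S)\<close> by (metis even_add even_numeral)
  next
    case False
    then have "S - {L, L'} = S"
      using same_ends[OF \<open>p \<in> A\<close>] by (auto simp: S_def)
    then show ?thesis using removed \<open>odd (card S)\<close> by simp
  qed
qed (use assms in \<open>auto simp: connection_iff\<close>)

lemma connection_reroute_segment:
  assumes conn: "connection \<Omega> A C" and "L \<in> C" and "L' \<noteq> L" and "connection_segment \<Omega> A L'"
    and same_ends: "\<And>p. p \<in> A \<Longrightarrow> is_endpoint p L' \<longleftrightarrow> is_endpoint p L"
  obtains C' where "connection \<Omega> A C'"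
    and "conn_length C' \<le> conn_length C - diameter L + diameter L'"
proof (cases "L' \<in> C")
  case True
  have "finite C" using conn by (simp add: connection_iff)
  have "0 \<le> diameter L'"
    using \<open>connection_segment \<Omega> A L'\<close>
    by (auto simp: connection_segment_def intro!: diameter_ge_0 compact_imp_bounded)
  have "C - {L, L'} = C - {L'} - {L}" by auto
  then have "conn_length (C - {L, L'}) = conn_length C - diameter L - diameter L'"
    using \<open>finite C\<close> \<open>L \<in> C\<close> True \<open>L' \<noteq> L\<close> by (simp add: conn_length_def sum_diff1)
  then show thesis
    using that connection_remove_segment_pair[OF conn \<open>L \<in> C\<close> True] \<open>L' \<noteq> L\<close> same_ends
      \<open>0 \<le> diameter L'\<close> by fastforce
next
  case False
  have "finite C" using conn by (simp add: connection_iff)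
  then have "conn_length (insert L' (C - {L})) = conn_length C - diameter L + diameter L'"
    using \<open>L \<in> C\<close> False by (simp add: conn_length_def sum_diff1)
  then show thesis
    using that connection_replace_segment[OF conn \<open>L \<in> C\<close> False] \<open>connection_segment \<Omega> A L'\<close>
      same_ends by fastforce
qed

lemma connection_segment_to_frontier:
  assumes "connection \<Omega> A C" and "L \<in> C" and "b \<in> frontier \<Omega>" and "is_endpoint b L"
    and "A \<inter> frontier \<Omega> = {}"
  obtains a where "a \<in> A" and "a \<noteq> b" and "L = closed_segment a b"
proof -
  obtain x y where xy: "x \<noteq> y" "L = closed_segment x y" "x \<in> A"
    using assms(1,2) by (auto simp: connection_iff connection_segment_def)
  then have "b = x \<or> b = y" using assms(4) is_endpoint_closed_segment_iff by blast
  moreover have "b \<noteq> x" using xy(3) assms(3,5) by blast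
  ultimately show ?thesis using that xy by blast
qed

lemma minimal_connection_nearest_frontier_point:
  assumes "open \<Omega>" and "A \<subseteq> \<Omega>" and min: "minimal_connection \<Omega> A C"
    and L: "closed_segment a b \<in> C" and "a \<in> A" and "b \<in> frontier \<Omega>" and "z \<in> frontier \<Omega>"
  shows "dist a b \<le> dist a z"
proof -
  have off_A: "w \<notin> A" if "w \<in> frontier \<Omega>" for w
    using that \<open>A \<subseteq> \<Omega>\<close> \<open>open \<Omega>\<close> by (auto simp: frontier_def interior_open)
  obtain c where c: "c \<in> frontier \<Omega>" and nearest: "\<And>w. w \<in> frontier \<Omega> \<Longrightarrow> dist a c \<le> dist a w"
    using distance_attains_inf[of "frontier \<Omega>" a] \<open>b \<in> frontier \<Omega>\<close> by blast
  have "dist a b \<le> dist a c"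
  proof (rule ccontr)
    assume closer: "\<not> dist a b \<le> dist a c"
    have "a \<noteq> b" "a \<noteq> c" "b \<noteq> c"
      using off_A \<open>a \<in> A\<close> \<open>b \<in> frontier \<Omega>\<close> c closer by auto
    have "closed_segment a c \<subseteq> closure \<Omega>"
      using closed_segment_to_nearest_frontier_point_subset_closure \<open>a \<in> A\<close> \<open>A \<subseteq> \<Omega>\<close> c nearest
      by blast
    then have "connection_segment \<Omega> A (closed_segment a c)"
      using \<open>a \<noteq> c\<close> \<open>a \<in> A\<close> c by (auto simp: connection_segment_def)
    moreover have "closed_segment a c \<noteq> closed_segment a b"
      using \<open>a \<noteq> c\<close> \<open>b \<noteq> c\<close> by (auto simp: doubleton_eq_iff)
    moreover have "is_endpoint p (closed_segment a c) \<longleftrightarrow> is_endpoint p (closed_segment a b)"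
      if "p \<in> A" for p
      using that off_A c \<open>b \<in> frontier \<Omega>\<close> \<open>a \<noteq> b\<close> \<open>a \<noteq> c\<close>
      by (auto simp: is_endpoint_closed_segment_iff)
    moreover have "connection \<Omega> A C" using min by (simp add: minimal_connection_def)
    ultimately obtain C' where "connection \<Omega> A C'"
      and "conn_length C' \<le> conn_length C - dist a b + dist a c"
      using connection_reroute_segment[of \<Omega> A C "closed_segment a b" "closed_segment a c"] L
      by (auto simp: diameter_closed_segment)
    with min closer show False by (fastforce simp: minimal_connection_def)
  qed
  also have "\<dots> \<le> dist a z" using nearest \<open>z \<in> frontier \<Omega>\<close> .
  finally show ?thesis .
qed

lemma nearest_point_orthogonal_to_curve:
  fixes \<gamma> :: "real \<Rightarrow> 'a::real_inner"
  assumes nearest: "\<And>z. z \<in> S \<Longrightarrow> dist a b \<le> dist a z" and "\<gamma> 0 = b"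
    and "\<forall>\<^sub>F t in nhds 0. \<gamma> t \<in> S" and "(\<gamma> has_vector_derivative v) (at 0)"
  shows "(a - b) \<bullet> v = 0"
proof -
  define f where "f t = (a - \<gamma> t) \<bullet> (a - \<gamma> t)" for t
  have "((\<lambda>t. a - \<gamma> t) has_derivative (\<lambda>h. h *\<^sub>R (- v))) (at 0)"
    using assms(4) unfolding has_vector_derivative_def by (auto intro!: derivative_eq_intros)
  from has_derivative_inner[OF this this]
  have "(f has_real_derivative - 2 * ((a - b) \<bullet> v)) (at 0)"
    unfolding has_field_derivative_def f_def
    by (rule has_derivative_eq_rhs) (auto simp: \<open>\<gamma> 0 = b\<close> inner_commute algebra_simps fun_eq_iff)
  moreover obtain d where "d > 0" and d: "\<And>t. dist t 0 < d \<Longrightarrow> \<gamma> t \<in> S"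
    using assms(3) unfolding eventually_nhds_metric by blast
  moreover have "\<forall>t. \<bar>0 - t\<bar> < d \<longrightarrow> f 0 \<le> f t"
  proof (intro allI impI)
    fix t :: real assume "\<bar>0 - t\<bar> < d"
    then have "norm (a - \<gamma> 0) \<le> norm (a - \<gamma> t)"
      using nearest d \<open>\<gamma> 0 = b\<close> by (simp add: dist_norm dist_real_def)
    then show "f 0 \<le> f t"
      unfolding f_def power2_norm_eq_inner[symmetric] by (simp add: power_mono)
  qed
  ultimately have "- 2 * ((a - b) \<bullet> v) = 0" by (intro DERIV_local_min)
  then show ?thesis by simp
qed

theorem lemma1p5:
  fixes \<Omega> :: "(real^2) set" and A :: "(real^2) set" and C :: "(real^2) set set"
  assumes "open \<Omega>" and "connected \<Omega>" and "bounded \<Omega>" and "simply_connected \<Omega>"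
    and "C1_boundary \<Omega>"
    and "finite A" and "A \<subseteq> \<Omega>"
    and "minimal_connection \<Omega> A C"
    and "L \<in> C" and "b \<in> frontier \<Omega>" and "is_endpoint b L"
  shows "\<exists>x. x \<noteq> b \<and> L = closed_segment b x \<and> orthogonal_to_boundary_at \<Omega> b x"
proof -
  have "A \<inter> frontier \<Omega> = {}"
    using \<open>open \<Omega>\<close> \<open>A \<subseteq> \<Omega>\<close> by (auto simp: frontier_def interior_open)
  then obtain a where "a \<in> A" "a \<noteq> b" and L: "L = closed_segment a b"
    using connection_segment_to_frontier assms(8-11) by (metis minimal_connection_def)
  have "\<And>z. z \<in> frontier \<Omega> \<Longrightarrow> dist a b \<le> dist a z"
    using minimal_connection_nearest_frontier_point[OF \<open>open \<Omega>\<close> \<open>A \<subseteq> \<Omega>\<close> assms(8)]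
      \<open>L \<in> C\<close> L \<open>a \<in> A\<close> \<open>b \<in> frontier \<Omega>\<close> by blast
  then have "orthogonal_to_boundary_at \<Omega> b a"
    unfolding orthogonal_to_boundary_at_def using nearest_point_orthogonal_to_curve by blast
  then show ?thesis using \<open>a \<noteq> b\<close> L closed_segment_commute by blast
qed

end
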